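(* Let $A,B\in\mathbb{C}^{n\times n}$ and let $C=A+B$. If $C$ is nonderogatory, then \[\frac{n-d(A)}{\operatorname{rank}(B)+1}\leq|\Lambda(A)|\leq n-d(A).\]
   Context: For $M\in\mathbb{C}^{n\times n}$, $\Lambda(M)$ denotes the set of distinct eigenvalues of $M$ and $|\cdot|$ the cardinality of a set. For $\lambda\in\Lambda(M)$, $m_a(M,\lambda)$ is its algebraic multiplicity and $m_g(M,\lambda)$ its geometric multiplicity. The defectivity of $M$ is $d(M):=\sum_{\lambda\in\Lambda(M)}\big(m_a(M,\lambda)-m_g(M,\lambda)\big)$. $M$ is called nonderogatory if $m_g(M,\lambda)=1$ for every $\lambda\in\Lambda(M)$. *)

theory Defs
  imports "Jordan_Normal_Form.Jordan_Normal_Form_Uniqueness" "Jordan_Normal_Form.DL_Rank"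
begin

definition eigenvalue_set :: "complex mat \<Rightarrow> complex set" where
  "eigenvalue_set M = {k. eigenvalue M k}"

definition alg_mult :: "complex mat \<Rightarrow> complex \<Rightarrow> nat" where
  "alg_mult M k = Polynomial.order k (char_poly M)"

definition geo_mult :: "complex mat \<Rightarrow> complex \<Rightarrow> nat" where
  "geo_mult M k = kernel_dim (char_matrix M k)"

definition defectivity :: "complex mat \<Rightarrow> nat" where
  "defectivity M = (\<Sum>k\<in>eigenvalue_set M. alg_mult M k - geo_mult M k)"

definition nonderogatory :: "complex mat \<Rightarrow> bool" where
  "nonderogatory M \<longleftrightarrow> (\<forall>k\<in>eigenvalue_set M. geo_mult M k = 1)"

end

theory Submission
  imports Defs "Jordan_Normal_Form.Jordan_Normal_Form_Existence"
begin

text \<open>For every \<lambda>, rank subadditivity and rank-nullity give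
  \<open>m_g(A,\<lambda>) \<le> m_g(A+B,\<lambda>) + rank B \<le> 1 + rank B\<close>, the last step because \<open>A + B\<close> is
  nonderogatory. Summing over \<open>\<Lambda>(A)\<close>, where \<open>1 \<le> m_g(A,\<lambda>)\<close>, and using
  \<open>\<Sum>\<^sub>\<lambda> m_g(A,\<lambda>) = n - d(A)\<close> (the algebraic multiplicities add up to n) gives
  \<open>|\<Lambda>(A)| \<le> n - d(A) \<le> |\<Lambda>(A)| (rank B + 1)\<close>.\<close>

lemma rank_plus_kernel_dim:
  fixes M :: "'a::field mat"
  assumes M: "M \<in> carrier_mat n n"
  shows "vec_space.rank n M + kernel_dim M = n"
proof -
  interpret V: vec_space "TYPE('a)" n .
  interpret K: kernel n n M by (unfold_locales, rule M)
  interpret LM: linear_map class_ring "module_vec TYPE('a) n" "module_vec TYPE('a) n" "\<lambda>v. M *\<^sub>v v"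
  proof (unfold_locales)
    show "(\<lambda>v. M *\<^sub>v v) \<in> module_hom class_ring (module_vec TYPE('a) n) (module_vec TYPE('a) n)"
      unfolding module_hom_def using M
      by (auto simp: module_vec_simps mult_add_distrib_mat_vec mult_mat_vec)
  qed
  have ker: "LM.kerT = mat_kernel M"
    unfolding mod_hom.ker_def[OF LM.mod_hom_axioms] mat_kernel_def using M
    by (auto simp: module_vec_simps)
  have im: "LM.imT = V.col_space M"
    unfolding mod_hom.im_def[OF LM.mod_hom_axioms] V.col_space_eq[OF M] using M
    by (auto simp: module_vec_simps)
  show ?thesis
    using LM.rank_nullity[OF V.fin_dim]
    unfolding ker im V.dim_is_n V.rank_def V.col_space_def K.kernel_dim by simp
qed

lemma kernel_dim_le_kernel_dim_add_rank:
  fixes M N :: "'a::field mat"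
  assumes M: "M \<in> carrier_mat n n" and N: "N \<in> carrier_mat n n"
  shows "kernel_dim M \<le> kernel_dim (M + N) + vec_space.rank n N"
proof -
  have "vec_space.rank n (M + N) \<le> vec_space.rank n M + vec_space.rank n N"
    by (rule vec_space.rank_subadditive[OF M N])
  moreover have "M + N \<in> carrier_mat n n" using M N by simp
  ultimately show ?thesis
    using rank_plus_kernel_dim[OF M] rank_plus_kernel_dim[of "M + N" n] by linarith
qed

lemma char_matrix_add:
  assumes "A \<in> carrier_mat n n" and "B \<in> carrier_mat n n"
  shows "char_matrix (A + B) k = char_matrix A k + B"
  unfolding char_matrix_def using assms by (intro eq_matI) auto

lemma geo_mult_le_geo_mult_add_rank:
  assumes A: "A \<in> carrier_mat n n" and B: "B \<in> carrier_mat n n"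
  shows "geo_mult A k \<le> geo_mult (A + B) k + vec_space.rank n B"
  unfolding geo_mult_def char_matrix_add[OF A B]
  by (rule kernel_dim_le_kernel_dim_add_rank[OF char_matrix_closed[OF A] B])

lemma sum_min_1_eq_length: "0 \<notin> set xs \<Longrightarrow> (\<Sum>x\<leftarrow>xs. min 1 x) = length (xs :: nat list)"
  by (induct xs) auto

lemma sum_list_pos_iff_ne_Nil: "0 \<notin> set xs \<Longrightarrow> 0 < sum_list (xs :: nat list) \<longleftrightarrow> xs \<noteq> []"
  by (cases xs) auto

lemma length_le_sum_list: "0 \<notin> set xs \<Longrightarrow> length xs \<le> sum_list (xs :: nat list)"
  by (induct xs) auto

lemma sum_sum_list_filter:
  assumes "finite S" and "g ` set xs \<subseteq> S"
  shows "(\<Sum>l\<in>S. sum_list (map f (filter (\<lambda>x. g x = l) xs))) = sum_list (map f xs)"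
  using assms(2)
proof (induct xs)
  case (Cons x xs)
  have "(\<Sum>l\<in>S. sum_list (map f (filter (\<lambda>y. g y = l) (x # xs))))
      = (\<Sum>l\<in>S. (if g x = l then f x else 0) + sum_list (map f (filter (\<lambda>y. g y = l) xs)))"
    by (intro sum.cong) auto
  also have "\<dots> = f x + sum_list (map f xs)"
    using Cons assms(1) by (simp add: sum.distrib)
  finally show ?case by simp
qed simp

abbreviation jordan_block_sizes :: "(nat \<times> 'a) list \<Rightarrow> 'a \<Rightarrow> nat list" where
  "jordan_block_sizes n_as k \<equiv> map fst (filter (\<lambda>na. snd na = k) n_as)"

lemma jordan_nf_block_sizes_pos: "jordan_nf M n_as \<Longrightarrow> 0 \<notin> set (jordan_block_sizes n_as k)"
  unfolding jordan_nf_def by force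

context
  fixes M :: "complex mat" and n :: nat and n_as :: "(nat \<times> complex) list"
  assumes M: "M \<in> carrier_mat n n" and jnf: "jordan_nf M n_as"
begin

lemma alg_mult_jordan_nf: "alg_mult M k = sum_list (jordan_block_sizes n_as k)"
  unfolding alg_mult_def by (rule jordan_nf_order[OF jnf])

lemma geo_mult_jordan_nf: "geo_mult M k = length (jordan_block_sizes n_as k)"
proof -
  have "geo_mult M k = dim_gen_eigenspace M k 1"
    unfolding geo_mult_def dim_gen_eigenspace_def using char_matrix_closed[OF M] by simp
  also have "\<dots> = (\<Sum>x\<leftarrow>jordan_block_sizes n_as k. min 1 x)"
    unfolding dim_gen_eigenspace[OF jnf] by (simp add: split_def)
  finally show ?thesis using sum_min_1_eq_length[OF jordan_nf_block_sizes_pos[OF jnf]] by simp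
qed

lemma eigenvalue_set_jordan_nf: "eigenvalue_set M = snd ` set n_as"
proof -
  have "char_poly M \<noteq> 0"
    using degree_monic_char_poly[OF M] by (metis coeff_0 zero_neq_one)
  then have "k \<in> eigenvalue_set M \<longleftrightarrow> 0 < alg_mult M k" for k
    unfolding eigenvalue_set_def alg_mult_def eigenvalue_root_char_poly[OF M]
    by (simp add: order_gt_0_iff)
  also have "\<dots> k \<longleftrightarrow> jordan_block_sizes n_as k \<noteq> []" for k
    unfolding alg_mult_jordan_nf by (rule sum_list_pos_iff_ne_Nil[OF jordan_nf_block_sizes_pos[OF jnf]])
  also have "\<dots> k \<longleftrightarrow> k \<in> snd ` set n_as" for k
    by (auto simp: filter_empty_conv)
  finally show ?thesis by blast
qed

lemma sum_jordan_block_sizes: "sum_list (map fst n_as) = n"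
proof -
  have "similar_mat M (jordan_matrix n_as)" using jnf unfolding jordan_nf_def by simp
  from similar_matD[OF this] obtain m where
    "M \<in> carrier_mat m m" "jordan_matrix n_as \<in> carrier_mat m m" by blast
  then show ?thesis using M jordan_matrix_carrier[of n_as] by (metis carrier_matD(1))
qed

end

lemma jordan_nf_exists_complex:
  fixes M :: "complex mat"
  assumes "M \<in> carrier_mat n n"
  obtains n_as where "jordan_nf M n_as"
  using char_poly_factorized[OF assms] jordan_nf_exists[OF assms] by blast

context
  fixes M :: "complex mat" and n :: nat
  assumes M: "M \<in> carrier_mat n n"
begin

lemma geo_mult_pos_iff: "0 < geo_mult M k \<longleftrightarrow> k \<in> eigenvalue_set M"
proof -
  obtain n_as where jnf: "jordan_nf M n_as" using jordan_nf_exists_complex[OF M] .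
  show ?thesis
    unfolding eigenvalue_set_jordan_nf[OF M jnf] geo_mult_jordan_nf[OF M jnf]
    by (force simp: filter_empty_conv)
qed

lemma geo_mult_le_alg_mult: "geo_mult M k \<le> alg_mult M k"
proof -
  obtain n_as where jnf: "jordan_nf M n_as" using jordan_nf_exists_complex[OF M] .
  show ?thesis
    unfolding geo_mult_jordan_nf[OF M jnf] alg_mult_jordan_nf[OF M jnf]
    by (rule length_le_sum_list[OF jordan_nf_block_sizes_pos[OF jnf]])
qed

lemma sum_alg_mult: "(\<Sum>k\<in>eigenvalue_set M. alg_mult M k) = n"
proof -
  obtain n_as where jnf: "jordan_nf M n_as" using jordan_nf_exists_complex[OF M] .
  show ?thesis
    unfolding alg_mult_jordan_nf[OF M jnf] eigenvalue_set_jordan_nf[OF M jnf]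
    using sum_sum_list_filter[of "snd ` set n_as" snd n_as fst] sum_jordan_block_sizes[OF M jnf]
    by simp
qed

lemma defectivity_plus_sum_geo_mult:
  "defectivity M + (\<Sum>k\<in>eigenvalue_set M. geo_mult M k) = n"
proof -
  have "defectivity M = (\<Sum>k\<in>eigenvalue_set M. alg_mult M k) - (\<Sum>k\<in>eigenvalue_set M. geo_mult M k)"
    unfolding defectivity_def by (rule sum_subtractf_nat) (rule geo_mult_le_alg_mult)
  moreover have "(\<Sum>k\<in>eigenvalue_set M. geo_mult M k) \<le> (\<Sum>k\<in>eigenvalue_set M. alg_mult M k)"
    by (rule sum_mono) (rule geo_mult_le_alg_mult)
  ultimately show ?thesis using sum_alg_mult by simp
qed

lemma nonderogatory_geo_mult_le_1: "nonderogatory M \<Longrightarrow> geo_mult M k \<le> 1"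
  unfolding nonderogatory_def using geo_mult_pos_iff[of k] by fastforce

end

theorem corollary4p3:
  fixes A B :: "complex mat" and n :: nat
  assumes "A \<in> carrier_mat n n" and "B \<in> carrier_mat n n"
    and "nonderogatory (A + B)"
  shows "(real n - real (defectivity A)) / (real (vec_space.rank n B) + 1)
           \<le> real (card (eigenvalue_set A))
         \<and> real (card (eigenvalue_set A)) \<le> real n - real (defectivity A)"
proof -
  let ?L = "eigenvalue_set A" and ?r = "vec_space.rank n B"
  let ?G = "\<Sum>k\<in>?L. geo_mult A k"
  have AB: "A + B \<in> carrier_mat n n" using assms(1,2) by simp
  have G: "real n - real (defectivity A) = real ?G"
    using defectivity_plus_sum_geo_mult[OF assms(1)] by (metis add_diff_cancel_left' of_nat_add)
  have "card ?L \<le> ?G"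
    using sum_mono[of ?L "\<lambda>_. 1" "geo_mult A"] geo_mult_pos_iff[OF assms(1)] by force
  then have "real (card ?L) \<le> real ?G" by (simp only: of_nat_le_iff)
  moreover have "?G \<le> card ?L * (?r + 1)"
  proof -
    have "geo_mult A k \<le> ?r + 1" for k
      using geo_mult_le_geo_mult_add_rank[OF assms(1,2), of k]
        nonderogatory_geo_mult_le_1[OF AB assms(3), of k] by linarith
    then show ?thesis using sum_mono[of ?L "geo_mult A" "\<lambda>_. ?r + 1"] by simp
  qed
  then have "real ?G \<le> real (card ?L) * (real ?r + 1)"
    by (metis of_nat_1 of_nat_add of_nat_le_iff of_nat_mult)
  ultimately show ?thesis
    unfolding G by (simp add: divide_le_eq add_pos_nonneg)
qed

end
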